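(* Fix $q\in(0,1)$. Consider a sequence of problems indexed by $n\to\infty$ with dimension $p=p_n$ (possibly diverging with $n$). For each $n$, let $\widehat{W}_1,\ldots,\widehat{W}_p$ be real-valued random variables (the approximate knockoff statistics) and let $\mathcal{H}_0\subset\{1,\ldots,p\}$ be the (deterministic) set of null features. Define the threshold $$T_q \equiv \min\Big\{ t\in\{|\widehat W_1|,\ldots,|\widehat W_p|\} : \frac{\#\{j:\widehat W_j\le -t\}}{\#\{j:\widehat W_j\ge t\}\vee 1}\le q\Big\},$$ the selected set $\widehat{\mathcal S}\equiv\{j\in[p]:\widehat W_j\ge T_q\}$, and $$\mathrm{FDR}\equiv \mathbb E\Big[\frac{\#\{j: j\in\widehat{\mathcal S}\cap\mathcal H_0\}}{\#\{j:j\in\widehat{\mathcal S}\}\vee 1}\Big].$$ Assume that for some $\alpha_n>0$ the following hold: (1) (asymptotic approximate symmetry) $\displaystyle\sup_{t\in(0,\alpha_n)}\Big|\frac{\sum_{j\in\mathcal H_0}\mathbb P(\widehat W_j\ge t)}{\sum_{j\in\mathcal H_0}\mathbb P(\widehat W_j\le -t)}-1\Big| = o(1)$; (2) (approximation for indicator functions) $$\sup_{t\in(0,\alpha_n)}\Big\{\Big|\frac{\sum_{j\in\mathcal H_0}\mathbf 1\{\widehat W_j\ge t\}}{\sum_{j\in\mathcal H_0}\mathbb P(\widehat W_j\ge t)}-1\Big|\vee\Big|\frac{\sum_{j\in\mathcal H_0}\mathbf 1\{\widehat W_j\le -t\}}{\sum_{j\in\mathcal H_0}\mathbb P(\widehat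 W_j\le -t)}-1\Big|\Big\}=o_{\mathbb P}(1);$$ (3) (localization of $T_q$) $\mathbb P(T_q>\alpha_n)=o(1)$. Then $\limsup_{n\to\infty}\mathrm{FDR}\le q$.
   Context: All asymptotic statements are as $n\to\infty$ with $p$ allowed to diverge with $n$; $a_n=o(b_n)$ means $a_n/b_n\to0$ and $a_n=o_{\mathbb P}(b_n)$ means $a_n/b_n\to0$ in probability. $a\vee b=\max\{a,b\}$. *)

theory Defs
  imports "HOL-Probability.Probability"
begin

text \<open>Knockoff threshold T_q (features indexed by 1..p). The minimum over an empty
  candidate set is taken to be +infinity (no feature is then selected).\<close>
definition Tq :: "real \<Rightarrow> nat \<Rightarrow> (nat \<Rightarrow> 'a \<Rightarrow> real) \<Rightarrow> 'a \<Rightarrow> ereal" where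
  "Tq q p W \<omega> =
     (let C = {t. t \<in> (\<lambda>j. \<bar>W j \<omega>\<bar>) ` {1..p} \<and>
                  real (card {j\<in>{1..p}. W j \<omega> \<le> - t})
                    / max (real (card {j\<in>{1..p}. W j \<omega> \<ge> t})) 1 \<le> q}
      in if C = {} then \<infinity> else ereal (Min C))"

definition selected :: "real \<Rightarrow> nat \<Rightarrow> (nat \<Rightarrow> 'a \<Rightarrow> real) \<Rightarrow> 'a \<Rightarrow> nat set" where
  "selected q p W \<omega> = {j\<in>{1..p}. ereal (W j \<omega>) \<ge> Tq q p W \<omega>}"

definition FDP :: "real \<Rightarrow> nat \<Rightarrow> nat set \<Rightarrow> (nat \<Rightarrow> 'a \<Rightarrow> real) \<Rightarrow> 'a \<Rightarrow> real" where
  "FDP q p H0 W \<omega> =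
     real (card (selected q p W \<omega> \<inter> H0)) / max (real (card (selected q p W \<omega>))) 1"

definition FDR :: "'a measure \<Rightarrow> real \<Rightarrow> nat \<Rightarrow> nat set \<Rightarrow> (nat \<Rightarrow> 'a \<Rightarrow> real) \<Rightarrow> real" where
  "FDR M q p H0 W = integral\<^sup>L M (FDP q p H0 W)"

end

theory Submission
  imports Defs
begin

text \<open>
  Fix \<open>e \<in> (0,1)\<close>. Off two events of vanishing probability -- the indicator
  approximation failing somewhere in \<open>(0, \<alpha>\<^sub>n)\<close>, and \<open>T\<^sub>q > \<alpha>\<^sub>n\<close> -- the
  approximations combine with the approximate symmetry into the pathwise bound
  \<open>#{j \<in> H\<^sub>0 : W\<^sub>j \<ge> t} \<le> (1+e)\<^sup>2/(1-e) \<cdot> #{j \<in> H\<^sub>0 : W\<^sub>j \<le> -t}\<close> for all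
  \<open>t \<in> (0, \<alpha>\<^sub>n)\<close>. At \<open>t = T\<^sub>q\<close> this bounds the false discoveries by
  \<open>(1+e)\<^sup>2/(1-e)\<close> times \<open>#{j : W\<^sub>j \<le> -T\<^sub>q}\<close>, which the defining property of
  \<open>T\<^sub>q\<close> bounds by \<open>q\<close> times the number of selections. So the FDP is at most
  \<open>(1+e)\<^sup>2/(1-e) \<cdot> q\<close> off the exceptional events and at most 1 on them, whence
  \<open>limsup FDR \<le> (1+e)\<^sup>2/(1-e) \<cdot> q\<close>; let \<open>e \<rightarrow> 0\<close>.
\<close>

definition Tq_candidates :: "real \<Rightarrow> nat \<Rightarrow> (nat \<Rightarrow> 'a \<Rightarrow> real) \<Rightarrow> 'a \<Rightarrow> real set" where
  "Tq_candidates q p W \<omega> = {t \<in> (\<lambda>j. \<bar>W j \<omega>\<bar>) ` {1..p}.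
     real (card {j\<in>{1..p}. W j \<omega> \<le> - t}) / max (real (card {j\<in>{1..p}. W j \<omega> \<ge> t})) 1 \<le> q}"

lemma finite_Tq_candidates: "finite (Tq_candidates q p W \<omega>)"
  unfolding Tq_candidates_def by simp

lemma Tq_eq_Min:
  "Tq q p W \<omega> = (let C = Tq_candidates q p W \<omega> in if C = {} then \<infinity> else ereal (Min C))"
  unfolding Tq_def Tq_candidates_def ..

lemma Tq_le_ereal_iff: "Tq q p W \<omega> \<le> ereal a \<longleftrightarrow> (\<exists>t\<in>Tq_candidates q p W \<omega>. t \<le> a)"
  using finite_Tq_candidates[of q p W \<omega>] by (auto simp: Tq_eq_Min Let_def Min_le_iff)

lemma exists_threshold_between:
  fixes V :: "real set"
  assumes "finite V" "0 \<le> T" "T \<le> a" "0 < a"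
  obtains t where "0 < t" "t < a" "\<And>v. v \<in> V \<Longrightarrow> 0 < v \<Longrightarrow> t \<le> v \<longleftrightarrow> T \<le> v"
proof -
  define lo where "lo = Max (insert 0 {v\<in>V. v < T})"
  define hi where "hi = Min (insert a {v\<in>V. 0 < v \<and> T \<le> v})"
  have "lo < hi"
    unfolding lo_def hi_def using assms by (auto simp: Max_less_iff Min_gr_iff)
  have "0 \<le> lo" and below: "\<And>v. v \<in> V \<Longrightarrow> v < T \<Longrightarrow> v \<le> lo"
    unfolding lo_def using assms(1) by auto
  have "hi \<le> a" and above: "\<And>v. v \<in> V \<Longrightarrow> 0 < v \<Longrightarrow> T \<le> v \<Longrightarrow> hi \<le> v"
    unfolding hi_def using assms(1) by auto
  show ?thesis
  proof (rule that[of "(lo + hi) / 2"])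
    fix v assume "v \<in> V" "0 < v"
    then show "(lo + hi) / 2 \<le> v \<longleftrightarrow> T \<le> v"
      using below[of v] above[of v] \<open>lo < hi\<close> by (cases "v < T") auto
  qed (use \<open>lo < hi\<close> \<open>0 \<le> lo\<close> \<open>hi \<le> a\<close> in auto)
qed

text \<open>Both counts only change at the values \<open>\<bar>w j\<bar>\<close>, so the bound passes from the open
  interval to its closure. At \<open>T = 0\<close> the zeros of \<open>w\<close> are counted on both sides,
  which is why \<open>1 \<le> c\<close> is needed.\<close>

lemma tail_count_bound_extends:
  fixes w :: "'i \<Rightarrow> real"
  assumes H: "finite H" and T: "0 \<le> T" "T \<le> a" and a: "0 < a" and c: "1 \<le> c"
    and bound: "\<And>t. 0 < t \<Longrightarrow> t < a \<Longrightarrow>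
      real (card {j\<in>H. t \<le> w j}) \<le> c * real (card {j\<in>H. w j \<le> - t})"
  shows "real (card {j\<in>H. T \<le> w j}) \<le> c * real (card {j\<in>H. w j \<le> - T})"
proof -
  obtain t where t: "0 < t" "t < a"
    and t_iff: "\<And>v. v \<in> (\<lambda>j. \<bar>w j\<bar>) ` H \<Longrightarrow> 0 < v \<Longrightarrow> t \<le> v \<longleftrightarrow> T \<le> v"
    using exists_threshold_between[of "(\<lambda>j. \<bar>w j\<bar>) ` H" T a] H T a by auto
  have t_upper: "t \<le> w j \<longleftrightarrow> T \<le> w j \<and> w j \<noteq> 0"
    and t_lower: "w j \<le> - t \<longleftrightarrow> w j \<le> - T \<and> w j \<noteq> 0" if "j \<in> H" for j
  proof -
    have "t \<le> \<bar>w j\<bar> \<longleftrightarrow> T \<le> \<bar>w j\<bar>" if "w j \<noteq> 0"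
      using t_iff[of "\<bar>w j\<bar>"] \<open>j \<in> H\<close> that by auto
    then show "t \<le> w j \<longleftrightarrow> T \<le> w j \<and> w j \<noteq> 0"
      using t T by (cases "0 < w j") auto
    from \<open>w j \<noteq> 0 \<Longrightarrow> _\<close> show "w j \<le> - t \<longleftrightarrow> w j \<le> - T \<and> w j \<noteq> 0"
      using t T by (cases "w j < 0") auto
  qed
  define Z where "Z = {j\<in>H. w j = 0 \<and> w j \<le> - T}"
  have "real (card {j\<in>H. T \<le> w j}) \<le> real (card ({j\<in>H. t \<le> w j} \<union> Z))"
    using H T t_upper by (intro of_nat_mono card_mono) (auto simp: Z_def)
  also have "\<dots> \<le> real (card {j\<in>H. t \<le> w j}) + real (card Z)"
    using card_Un_le of_nat_mono by fastforce
  also have "\<dots> \<le> c * real (card {j\<in>H. w j \<le> - t}) + c * real (card Z)"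
    using bound[OF t] c by (intro add_mono) (auto simp: mult_le_cancel_right1)
  also have "\<dots> = c * real (card ({j\<in>H. w j \<le> - t} \<union> Z))"
    using H t by (subst card_Un_disjoint) (auto simp: Z_def algebra_simps)
  also have "\<dots> \<le> c * real (card {j\<in>H. w j \<le> - T})"
    using H c t_lower by (intro mult_left_mono of_nat_mono card_mono) (auto simp: Z_def)
  finally show ?thesis .
qed

definition upper_tail_count :: "nat set \<Rightarrow> (nat \<Rightarrow> 'a \<Rightarrow> real) \<Rightarrow> real \<Rightarrow> 'a \<Rightarrow> real" where
  "upper_tail_count H W t \<omega> = real (card {j\<in>H. t \<le> W j \<omega>})"

definition lower_tail_count :: "nat set \<Rightarrow> (nat \<Rightarrow> 'a \<Rightarrow> real) \<Rightarrow> real \<Rightarrow> 'a \<Rightarrow> real" where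
  "lower_tail_count H W t \<omega> = real (card {j\<in>H. W j \<omega> \<le> - t})"

definition upper_tail_mass :: "'a measure \<Rightarrow> nat set \<Rightarrow> (nat \<Rightarrow> 'a \<Rightarrow> real) \<Rightarrow> real \<Rightarrow> real" where
  "upper_tail_mass M H W t = (\<Sum>j\<in>H. measure M {\<omega>\<in>space M. t \<le> W j \<omega>})"

definition lower_tail_mass :: "'a measure \<Rightarrow> nat set \<Rightarrow> (nat \<Rightarrow> 'a \<Rightarrow> real) \<Rightarrow> real \<Rightarrow> real" where
  "lower_tail_mass M H W t = (\<Sum>j\<in>H. measure M {\<omega>\<in>space M. W j \<omega> \<le> - t})"

lemma FDP_le_of_tail_count_bound:
  assumes H: "H \<subseteq> {1..p}" and a: "0 < a" and c: "1 \<le> c"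
    and bound: "\<And>t. 0 < t \<Longrightarrow> t < a \<Longrightarrow>
      upper_tail_count H W t \<omega> \<le> c * lower_tail_count H W t \<omega>"
    and Tq: "Tq q p W \<omega> \<le> ereal a"
  shows "FDP q p H W \<omega> \<le> c * q"
proof -
  define C where "C = Tq_candidates q p W \<omega>"
  have "C \<noteq> {}" using Tq by (auto simp: C_def Tq_le_ereal_iff)
  define T where "T = Min C"
  have "T \<in> C" "T \<le> a"
    using \<open>C \<noteq> {}\<close> Tq finite_Tq_candidates[of q p W \<omega>] by (auto simp: T_def C_def Tq_eq_Min)
  then have T: "0 \<le> T" "T \<le> a"
    and ratio: "real (card {j\<in>{1..p}. W j \<omega> \<le> - T}) / max (real (card {j\<in>{1..p}. T \<le> W j \<omega>})) 1 \<le> q"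
    by (auto simp: C_def Tq_candidates_def)
  have selected: "selected q p W \<omega> = {j\<in>{1..p}. T \<le> W j \<omega>}"
    using \<open>C \<noteq> {}\<close> by (simp add: selected_def Tq_eq_Min T_def C_def)
  have finite_H: "finite H" using H finite_subset by blast
  have "selected q p W \<omega> \<inter> H = {j\<in>H. T \<le> W j \<omega>}"
    using H by (auto simp: selected)
  then have "real (card (selected q p W \<omega> \<inter> H)) = real (card {j\<in>H. T \<le> W j \<omega>})"
    by simp
  also have "\<dots> \<le> c * real (card {j\<in>H. W j \<omega> \<le> - T})"
    by (rule tail_count_bound_extends[OF finite_H T a c bound[unfolded upper_tail_count_def lower_tail_count_def]])
  also have "\<dots> \<le> c * real (card {j\<in>{1..p}. W j \<omega> \<le> - T})"
    using H c by (intro mult_left_mono of_nat_mono card_mono) auto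
  finally have nulls: "real (card (selected q p W \<omega> \<inter> H)) \<le> c * real (card {j\<in>{1..p}. W j \<omega> \<le> - T})" .
  have "FDP q p H W \<omega> \<le> c * real (card {j\<in>{1..p}. W j \<omega> \<le> - T}) / max (real (card {j\<in>{1..p}. T \<le> W j \<omega>})) 1"
    unfolding FDP_def selected[symmetric] using nulls by (intro divide_right_mono) auto
  also have "\<dots> \<le> c * q"
    using ratio c by (simp add: mult_left_mono times_divide_eq_right[symmetric] del: times_divide_eq_right)
  finally show ?thesis .
qed

lemma borel_measurable_card_Collect:
  assumes "finite I" "\<And>i. i \<in> I \<Longrightarrow> {\<omega>\<in>space M. P i \<omega>} \<in> sets M"
  shows "(\<lambda>\<omega>. real (card {i\<in>I. P i \<omega>})) \<in> borel_measurable M"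
proof -
  have "(\<lambda>\<omega>. \<Sum>i\<in>I. indicator {\<omega>\<in>space M. P i \<omega>} \<omega> :: real) \<in> borel_measurable M"
    using assms(2) by (intro borel_measurable_sum borel_measurable_indicator)
  moreover have "real (card {i\<in>I. P i \<omega>}) = (\<Sum>i\<in>I. indicator {\<omega>\<in>space M. P i \<omega>} \<omega>)"
    if "\<omega> \<in> space M" for \<omega>
    using assms(1) that by (simp add: indicator_def sum.If_cases Int_def conj_commute)
  ultimately show ?thesis
    by (simp cong: measurable_cong)
qed

lemma sets_Tq_gt:
  assumes "\<And>j. j \<in> {1..p} \<Longrightarrow> W j \<in> borel_measurable M"
  shows "{\<omega>\<in>space M. ereal a < Tq q p W \<omega>} \<in> sets M"
proof -
  have "{\<omega>\<in>space M. ereal a < Tq q p W \<omega>} = {\<omega>\<in>space M. \<not> (\<exists>j\<in>{1..p}. \<bar>W j \<omega>\<bar> \<le> a \<and>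
      real (card {i\<in>{1..p}. W i \<omega> \<le> - \<bar>W j \<omega>\<bar>})
        / max (real (card {i\<in>{1..p}. \<bar>W j \<omega>\<bar> \<le> W i \<omega>})) 1 \<le> q)}"
    unfolding not_le[symmetric] Tq_le_ereal_iff Tq_candidates_def by blast
  also have "\<dots> \<in> sets M"
  proof (intro sets.sets_Collect_neg sets.sets_Collect_finite_Ex finite_atLeastAtMost)
    fix j assume j: "j \<in> {1..p}"
    note [measurable] = assms[OF j]
    have [measurable]: "(\<lambda>\<omega>. real (card {i\<in>{1..p}. W i \<omega> \<le> - \<bar>W j \<omega>\<bar>})) \<in> borel_measurable M"
      "(\<lambda>\<omega>. real (card {i\<in>{1..p}. \<bar>W j \<omega>\<bar> \<le> W i \<omega>})) \<in> borel_measurable M"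
      using assms by (intro borel_measurable_card_Collect; measurable)+
    show "{\<omega>\<in>space M. \<bar>W j \<omega>\<bar> \<le> a \<and> real (card {i\<in>{1..p}. W i \<omega> \<le> - \<bar>W j \<omega>\<bar>})
        / max (real (card {i\<in>{1..p}. \<bar>W j \<omega>\<bar> \<le> W i \<omega>})) 1 \<le> q} \<in> sets M"
      by measurable
  qed
  finally show ?thesis .
qed

lemma FDP_le_1:
  assumes "H \<subseteq> {1..p}"
  shows "FDP q p H W \<omega> \<le> 1"
proof -
  have "card (selected q p W \<omega> \<inter> H) \<le> card (selected q p W \<omega>)"
    by (intro card_mono) (auto simp: selected_def)
  then show ?thesis by (simp add: FDP_def divide_le_eq_1 le_max_iff_disj less_max_iff_disj)
qed

lemma relative_error_chain_le:
  fixes x y u v e :: real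
  assumes e: "0 < e" "e < 1" and nonneg: "0 \<le> x" "0 \<le> u" "0 \<le> v"
    and "\<bar>x / u - 1\<bar> \<le> e" "\<bar>u / v - 1\<bar> \<le> e" "\<bar>y / v - 1\<bar> \<le> e"
  shows "x \<le> (1 + e)\<^sup>2 / (1 - e) * y"
proof -
  have "u > 0" "v > 0" using assms by (auto intro: neq_le_trans)
  then have "x \<le> (1 + e) * u" "u \<le> (1 + e) * v" "(1 - e) * v \<le> y"
    using assms by (auto simp: abs_le_iff field_simps)
  then have "x \<le> (1 + e)\<^sup>2 * v"
    using e by (smt (verit) mult_left_mono power2_eq_square mult.assoc)
  also have "\<dots> \<le> (1 + e)\<^sup>2 * (y / (1 - e))"
    using \<open>(1 - e) * v \<le> y\<close> e by (intro mult_left_mono) (auto simp: field_simps)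
  finally show ?thesis by simp
qed

lemma (in prob_space) integral_le_of_bound_off_event:
  assumes G: "G \<in> events" and b: "0 \<le> b"
    and le_1: "\<And>\<omega>. \<omega> \<in> space M \<Longrightarrow> f \<omega> \<le> 1"
    and le_b: "\<And>\<omega>. \<omega> \<in> space M - G \<Longrightarrow> f \<omega> \<le> b"
  shows "integral\<^sup>L M f \<le> b + prob G"
proof (cases "integrable M f")
  case True
  have "f \<omega> \<le> b + indicator G \<omega>" if "\<omega> \<in> space M" for \<omega>
    using le_1[OF that] le_b[of \<omega>] b that by (cases "\<omega> \<in> G") auto
  moreover have "integrable M (\<lambda>\<omega>. b + indicator G \<omega>)"
    using G by (intro Bochner_Integration.integrable_add integrable_real_indicator) (auto simp: emeasure_eq_measure)
  ultimately have "integral\<^sup>L M f \<le> integral\<^sup>L M (\<lambda>\<omega>. b + indicator G \<omega>)"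
    using True by (intro integral_mono)
  also have "\<dots> = b + prob G"
    using G by (subst Bochner_Integration.integral_add) (auto simp: prob_space emeasure_eq_measure)
  finally show ?thesis .
next
  case False
  then show ?thesis using b by (simp add: not_integrable_integral_eq)
qed

lemma FDR_le_of_approximate_symmetry:
  assumes "prob_space M"
    and meas: "\<And>j. j \<in> {1..p} \<Longrightarrow> W j \<in> borel_measurable M"
    and H: "H \<subseteq> {1..p}" and a: "0 < a" and e: "0 < e" "e < 1" and q: "0 \<le> q"
    and sym: "\<And>t. 0 < t \<Longrightarrow> t < a \<Longrightarrow> \<bar>upper_tail_mass M H W t / lower_tail_mass M H W t - 1\<bar> \<le> e"
    and A: "A \<in> sets M"
    and bad: "{\<omega>\<in>space M. \<exists>t\<in>{0<..<a}.
        e < \<bar>upper_tail_count H W t \<omega> / upper_tail_mass M H W t - 1\<bar> \<or>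
        e < \<bar>lower_tail_count H W t \<omega> / lower_tail_mass M H W t - 1\<bar>} \<subseteq> A"
  shows "FDR M q p H W \<le> (1 + e)\<^sup>2 / (1 - e) * q + measure M A
    + measure M {\<omega>\<in>space M. ereal a < Tq q p W \<omega>}"
proof -
  interpret prob_space M by fact
  define B where "B = {\<omega>\<in>space M. ereal a < Tq q p W \<omega>}"
  have B: "B \<in> events" unfolding B_def by (rule sets_Tq_gt[OF meas])
  have c: "1 \<le> (1 + e)\<^sup>2 / (1 - e)" using e by (simp add: field_simps power2_eq_square)
  then have "0 \<le> (1 + e)\<^sup>2 / (1 - e) * q" using q by (intro mult_nonneg_nonneg) linarith+
  have "FDP q p H W \<omega> \<le> (1 + e)\<^sup>2 / (1 - e) * q" if \<omega>: "\<omega> \<in> space M - (A \<union> B)" for \<omega>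
  proof (rule FDP_le_of_tail_count_bound[OF H a c])
    show "Tq q p W \<omega> \<le> ereal a" using \<omega> by (auto simp: B_def not_less)
    fix t assume t: "0 < t" "t < a"
    then have "t \<in> {0<..<a}" by simp
    then have "\<not> (e < \<bar>upper_tail_count H W t \<omega> / upper_tail_mass M H W t - 1\<bar> \<or>
        e < \<bar>lower_tail_count H W t \<omega> / lower_tail_mass M H W t - 1\<bar>)"
      using bad \<omega> by blast
    moreover have "0 \<le> upper_tail_mass M H W t" "0 \<le> lower_tail_mass M H W t"
      by (auto simp: upper_tail_mass_def lower_tail_mass_def intro!: sum_nonneg)
    ultimately show "upper_tail_count H W t \<omega> \<le> (1 + e)\<^sup>2 / (1 - e) * lower_tail_count H W t \<omega>"
      by (intro relative_error_chain_le[OF e _ _ _ _ sym[OF t]]) (auto simp: upper_tail_count_def)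
  qed
  then have "FDR M q p H W \<le> (1 + e)\<^sup>2 / (1 - e) * q + prob (A \<union> B)"
    unfolding FDR_def using A B \<open>0 \<le> (1 + e)\<^sup>2 / (1 - e) * q\<close>
    by (intro integral_le_of_bound_off_event FDP_le_1[OF H]) auto
  also have "\<dots> \<le> (1 + e)\<^sup>2 / (1 - e) * q + prob A + prob B"
    using measure_Un_le[OF A B] by simp
  finally show ?thesis by (simp add: B_def)
qed

lemma limsup_FDR_le_inflated_level:
  fixes M :: "nat \<Rightarrow> 'a measure"
  assumes prob: "\<And>n. prob_space (M n)"
    and meas: "\<And>n j. j \<in> {1..p n} \<Longrightarrow> W n j \<in> borel_measurable (M n)"
    and H0: "\<And>n. H0 n \<subseteq> {1..p n}" and alpha: "\<And>n. 0 < alpha n"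
    and e: "0 < e" "e < 1" and q: "0 \<le> q"
    and sym: "eventually (\<lambda>n. \<forall>t\<in>{0<..<alpha n}.
      \<bar>upper_tail_mass (M n) (H0 n) (W n) t / lower_tail_mass (M n) (H0 n) (W n) t - 1\<bar> \<le> e) sequentially"
    and A: "\<And>n. A n \<in> sets (M n)" and A_lim: "(\<lambda>n. measure (M n) (A n)) \<longlonglongrightarrow> 0"
    and bad: "\<And>n. {\<omega>\<in>space (M n). \<exists>t\<in>{0<..<alpha n}.
        e < \<bar>upper_tail_count (H0 n) (W n) t \<omega> / upper_tail_mass (M n) (H0 n) (W n) t - 1\<bar> \<or>
        e < \<bar>lower_tail_count (H0 n) (W n) t \<omega> / lower_tail_mass (M n) (H0 n) (W n) t - 1\<bar>} \<subseteq> A n"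
    and local: "(\<lambda>n. measure (M n) {\<omega>\<in>space (M n). ereal (alpha n) < Tq q (p n) (W n) \<omega>}) \<longlonglongrightarrow> 0"
  shows "limsup (\<lambda>n. ereal (FDR (M n) q (p n) (H0 n) (W n))) \<le> ereal ((1 + e)\<^sup>2 / (1 - e) * q)"
proof -
  define bound where "bound n = (1 + e)\<^sup>2 / (1 - e) * q + measure (M n) (A n)
    + measure (M n) {\<omega>\<in>space (M n). ereal (alpha n) < Tq q (p n) (W n) \<omega>}" for n
  have "eventually (\<lambda>n. ereal (FDR (M n) q (p n) (H0 n) (W n)) \<le> ereal (bound n)) sequentially"
    using sym
  proof eventually_elim
    case (elim n)
    then show ?case
      unfolding bound_def ereal_less_eq
      by (intro FDR_le_of_approximate_symmetry[OF prob meas H0 alpha e q _ A bad]) auto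
  qed
  then have "limsup (\<lambda>n. ereal (FDR (M n) q (p n) (H0 n) (W n))) \<le> limsup (\<lambda>n. ereal (bound n))"
    by (rule Limsup_mono)
  also have "\<dots> = ereal ((1 + e)\<^sup>2 / (1 - e) * q)"
  proof (rule lim_imp_Limsup[OF trivial_limit_sequentially])
    have "bound \<longlonglongrightarrow> (1 + e)\<^sup>2 / (1 - e) * q + 0 + 0"
      unfolding bound_def using A_lim local by (intro tendsto_add tendsto_const)
    then show "(\<lambda>n. ereal (bound n)) \<longlonglongrightarrow> ereal ((1 + e)\<^sup>2 / (1 - e) * q)"
      by (simp add: lim_ereal)
  qed
  finally show ?thesis .
qed

lemma ereal_le_of_inflated_bounds:
  fixes x :: ereal and q :: real
  assumes "\<And>e. 0 < e \<Longrightarrow> e < 1 \<Longrightarrow> x \<le> ereal ((1 + e)\<^sup>2 / (1 - e) * q)"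
  shows "x \<le> ereal q"
proof -
  have "((\<lambda>e. (1 + e)\<^sup>2 / (1 - e) * q) \<longlongrightarrow> (1 + 0)\<^sup>2 / (1 - 0) * q) (at_right 0)"
    by (intro tendsto_intros) auto
  then have "((\<lambda>e. ereal ((1 + e)\<^sup>2 / (1 - e) * q)) \<longlongrightarrow> ereal q) (at_right 0)"
    by (simp add: lim_ereal)
  moreover have "eventually (\<lambda>e. e \<in> {0<..<1}) (at_right (0::real))"
    by (rule eventually_at_right_real) simp
  then have "eventually (\<lambda>e. x \<le> ereal ((1 + e)\<^sup>2 / (1 - e) * q)) (at_right 0)"
    by eventually_elim (intro assms; simp)
  ultimately show ?thesis
    by (rule tendsto_le[OF trivial_limit_at_right_real _ tendsto_const])
qed

theorem theorem1:
  fixes M :: "nat \<Rightarrow> 'a measure" and p :: "nat \<Rightarrow> nat"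
    and W :: "nat \<Rightarrow> nat \<Rightarrow> 'a \<Rightarrow> real" and H0 :: "nat \<Rightarrow> nat set"
    and alpha :: "nat \<Rightarrow> real" and q :: real
  assumes q: "0 < q" "q < 1"
    and prob: "\<And>n. prob_space (M n)"
    and meas: "\<And>n j. j \<in> {1..p n} \<Longrightarrow> W n j \<in> borel_measurable (M n)"
    and H0: "\<And>n. H0 n \<subseteq> {1..p n}"
    and alpha: "\<And>n. alpha n > 0"
    and sym: "\<And>\<epsilon>. \<epsilon> > 0 \<Longrightarrow> eventually (\<lambda>n. \<forall>t\<in>{0<..<alpha n}.
              \<bar>(\<Sum>j\<in>H0 n. measure (M n) {\<omega>\<in>space (M n). W n j \<omega> \<ge> t})
               / (\<Sum>j\<in>H0 n. measure (M n) {\<omega>\<in>space (M n). W n j \<omega> \<le> - t}) - 1\<bar> \<le> \<epsilon>)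
              sequentially"
    and approx: "\<And>\<epsilon>. \<epsilon> > 0 \<Longrightarrow> \<exists>A. (\<forall>n. A n \<in> sets (M n)) \<and>
              (\<forall>n. {\<omega>\<in>space (M n). \<exists>t\<in>{0<..<alpha n}.
                 \<bar>real (card {j\<in>H0 n. W n j \<omega> \<ge> t})
                   / (\<Sum>j\<in>H0 n. measure (M n) {\<omega>'\<in>space (M n). W n j \<omega>' \<ge> t}) - 1\<bar> > \<epsilon> \<or>
                 \<bar>real (card {j\<in>H0 n. W n j \<omega> \<le> - t})
                   / (\<Sum>j\<in>H0 n. measure (M n) {\<omega>'\<in>space (M n). W n j \<omega>' \<le> - t}) - 1\<bar> > \<epsilon>}
                 \<subseteq> A n) \<and>
              (\<lambda>n. measure (M n) (A n)) \<longlonglongrightarrow> 0"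
    and local: "(\<lambda>n. measure (M n) {\<omega>\<in>space (M n). Tq q (p n) (W n) \<omega> > ereal (alpha n)})
              \<longlonglongrightarrow> 0"
  shows "limsup (\<lambda>n. ereal (FDR (M n) q (p n) (H0 n) (W n))) \<le> ereal q"
proof (rule ereal_le_of_inflated_bounds)
  fix e :: real assume e: "0 < e" "e < 1"
  obtain A where A: "\<And>n. A n \<in> sets (M n)" and A_lim: "(\<lambda>n. measure (M n) (A n)) \<longlonglongrightarrow> 0"
    and bad: "\<And>n. {\<omega>\<in>space (M n). \<exists>t\<in>{0<..<alpha n}.
        e < \<bar>upper_tail_count (H0 n) (W n) t \<omega> / upper_tail_mass (M n) (H0 n) (W n) t - 1\<bar> \<or>
        e < \<bar>lower_tail_count (H0 n) (W n) t \<omega> / lower_tail_mass (M n) (H0 n) (W n) t - 1\<bar>} \<subseteq> A n"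
    using approx[OF e(1)] unfolding upper_tail_count_def lower_tail_count_def
      upper_tail_mass_def lower_tail_mass_def by blast
  have sym_e: "eventually (\<lambda>n. \<forall>t\<in>{0<..<alpha n}.
      \<bar>upper_tail_mass (M n) (H0 n) (W n) t / lower_tail_mass (M n) (H0 n) (W n) t - 1\<bar> \<le> e) sequentially"
    using sym[OF e(1)] by (simp add: upper_tail_mass_def lower_tail_mass_def)
  show "limsup (\<lambda>n. ereal (FDR (M n) q (p n) (H0 n) (W n))) \<le> ereal ((1 + e)\<^sup>2 / (1 - e) * q)"
    using q local by (intro limsup_FDR_le_inflated_level[OF prob meas H0 alpha e _ sym_e A A_lim bad]) auto
qed

end
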